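(* Let $K$ be a complete discretely valued field with ring of integers $\mathcal{O}_K$. Let $F\in\mathcal{O}_K[x,y]$ be homogeneous of degree $n$ with $F(x,1)$ monic, let $L$ be the splitting field of $F(x,1)$ over $K$ with normalized valuation $v$, and let $\alpha_1,\dots,\alpha_n$ be the roots of $F(x,1)$ in $L$. Let $h\in\mathcal{O}_K$ with $v(h)>0$. Let $(a,b),(a',b')\in\mathcal{O}_K^2$ be primitive solutions of $F(x,y)=h$ (i.e. $a\mathcal{O}_K+b\mathcal{O}_K=a'\mathcal{O}_K+b'\mathcal{O}_K=\mathcal{O}_K$). Suppose that for some index $i$, $v(a-\alpha_ib)=\max_j v(a-\alpha_jb)$ and $v(a'-\alpha_ib')=\max_j v(a'-\alpha_jb')$. Then $v(a-\alpha_ib)=v(a'-\alpha_ib')$. *)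

theory Defs
  imports "HOL-Computational_Algebra.Polynomial" "HOL-Library.Extended_Real"
begin

text \<open>A normalized discrete valuation on the field L (the whole type 'l),
  with values in the integers together with infinity for 0.\<close>
definition normalized_discrete_valuation :: "('l::field \<Rightarrow> ereal) \<Rightarrow> bool" where
  "normalized_discrete_valuation v \<longleftrightarrow>
     (\<forall>x. v x = \<infinity> \<longleftrightarrow> x = 0) \<and>
     (\<forall>x. x \<noteq> 0 \<longrightarrow> (\<exists>k::int. v x = ereal (of_int k))) \<and>
     (\<forall>x y. v (x * y) = v x + v y) \<and>
     (\<forall>x y. min (v x) (v y) \<le> v (x + y)) \<and>
     (\<exists>\<pi>. v \<pi> = 1)"

definition is_subfield :: "'l::field set \<Rightarrow> bool" where
  "is_subfield S \<longleftrightarrow> 0 \<in> S \<and> 1 \<in> S \<and>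
     (\<forall>x\<in>S. \<forall>y\<in>S. x + y \<in> S \<and> x - y \<in> S \<and> x * y \<in> S) \<and>
     (\<forall>x\<in>S. inverse x \<in> S)"

definition complete_nontrivial_on :: "('l::field \<Rightarrow> ereal) \<Rightarrow> 'l set \<Rightarrow> bool" where
  "complete_nontrivial_on v K \<longleftrightarrow>
     (\<exists>x\<in>K. x \<noteq> 0 \<and> v x \<noteq> 0) \<and>
     (\<forall>s::nat \<Rightarrow> 'l. (\<forall>m. s m \<in> K) \<longrightarrow>
        (\<forall>M::int. \<exists>N. \<forall>m\<ge>N. \<forall>k\<ge>N. ereal (of_int M) \<le> v (s m - s k)) \<longrightarrow>
        (\<exists>l\<in>K. \<forall>M::int. \<exists>N. \<forall>m\<ge>N. ereal (of_int M) \<le> v (s m - l)))"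

definition ring_of_integers :: "('l::field \<Rightarrow> ereal) \<Rightarrow> 'l set \<Rightarrow> 'l set" where
  "ring_of_integers v K = {x \<in> K. 0 \<le> v x}"

definition generated_by :: "'l::field set \<Rightarrow> 'l set \<Rightarrow> bool" where
  "generated_by K R \<longleftrightarrow> (\<forall>S. is_subfield S \<and> K \<subseteq> S \<and> R \<subseteq> S \<longrightarrow> S = UNIV)"

text \<open>The binary form of degree n whose dehomogenization F(x,1) is f:
  F(x,y) = sum_k coeff f k * x^k * y^(n-k).\<close>
definition hom_eval :: "'l::comm_ring_1 poly \<Rightarrow> nat \<Rightarrow> 'l \<Rightarrow> 'l \<Rightarrow> 'l" where
  "hom_eval f n x y = (\<Sum>k\<le>n. coeff f k * x ^ k * y ^ (n - k))"

end

theory Submission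
  imports Defs
begin

(* Primitivity and v h > 0 force b and b' to be units: otherwise a is a unit and F(a,b) is
   congruent to a^n modulo the maximal ideal. Hence v(a - \<alpha>_j b) = v(x - \<alpha>_j) for x = a/b,
   and these valuations sum to v(h); likewise for y = a'/b'. If v(x - \<alpha>_i) < v(y - \<alpha>_i), the
   ultrametric inequality gives v(y - x) \<ge> v(x - \<alpha>_i) \<ge> v(x - \<alpha>_j), so v(y - \<alpha>_j) \<ge> v(x - \<alpha>_j)
   for every j, strictly for j = i, contradicting the equality of the two sums. *)

lemma ereal_sum_strict_mono_ex1:
  fixes f g :: "'i \<Rightarrow> ereal"
  assumes "finite A" "i \<in> A" "\<forall>j\<in>A. f j \<le> g j" "f i < g i"
    and finite: "\<forall>j\<in>A. \<bar>f j\<bar> \<noteq> \<infinity>"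
  shows "sum f A < sum g A"
proof -
  have "sum f (A - {i}) = (\<Sum>j\<in>A - {i}. ereal (real_of_ereal (f j)))"
    using finite by (intro sum.cong) (auto simp: ereal_real)
  then have rest_finite: "\<bar>sum f (A - {i})\<bar> \<noteq> \<infinity>"
    by (simp add: sum_ereal)
  have "sum f A = f i + sum f (A - {i})"
    using assms(1,2) by (simp add: sum.remove)
  also have "\<dots> < g i + sum f (A - {i})"
    using ereal_less_add[OF rest_finite \<open>f i < g i\<close>] by (simp add: add.commute)
  also have "\<dots> \<le> g i + sum g (A - {i})"
    using assms(3) by (intro add_left_mono sum_mono) auto
  also have "\<dots> = sum g A"
    using assms(1,2) by (simp add: sum.remove)
  finally show ?thesis .
qed

lemma hom_eval_eq_power_mult_poly:
  fixes f :: "'a::field poly"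
  assumes "b \<noteq> 0" "degree f = n"
  shows "hom_eval f n a b = b ^ n * poly f (a / b)"
  unfolding hom_eval_def poly_altdef assms(2) sum_distrib_left
proof (rule sum.cong)
  fix k assume "k \<in> {..n}"
  then have "b ^ n = b ^ k * b ^ (n - k)"
    by (simp add: power_add[symmetric])
  then show "coeff f k * a ^ k * b ^ (n - k) = b ^ n * (coeff f k * (a / b) ^ k)"
    using \<open>b \<noteq> 0\<close> by (simp add: power_divide field_simps)
qed simp

locale valuation =
  fixes v :: "'a::field \<Rightarrow> ereal"
  assumes v_eq_infinity_iff: "v x = \<infinity> \<longleftrightarrow> x = 0"
    and v_not_minus_infinity: "v x \<noteq> -\<infinity>"
    and v_mult: "v (x * y) = v x + v y"
    and v_ultrametric: "min (v x) (v y) \<le> v (x + y)"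
begin

lemma v_zero [simp]: "v 0 = \<infinity>"
  by (simp add: v_eq_infinity_iff)

lemma v_finite: "x \<noteq> 0 \<Longrightarrow> \<bar>v x\<bar> \<noteq> \<infinity>"
  using v_eq_infinity_iff v_not_minus_infinity by (cases "v x") auto

lemma v_one [simp]: "v 1 = 0"
proof -
  have "v 1 = v 1 + v 1"
    using v_mult[of 1 1] by simp
  then show ?thesis
    using v_finite[of 1] by (cases "v 1") auto
qed

lemma v_uminus [simp]: "v (- x) = v x"
proof -
  have "v 1 = v (-1) + v (-1)"
    using v_mult[of "-1" "-1"] by simp
  then have "v (-1) = 0"
    using v_finite[of "-1"] by (cases "v (-1)") auto
  then show ?thesis
    using v_mult[of "-1" x] by simp
qed

lemma v_ultrametric_diff: "min (v x) (v y) \<le> v (x - y)"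
  using v_ultrametric[of x "- y"] by simp

lemma v_power_eq_0: "v x = 0 \<Longrightarrow> v (x ^ m) = 0"
  by (induction m) (simp_all add: v_mult)

lemma v_power_nonneg: "0 \<le> v x \<Longrightarrow> 0 \<le> v (x ^ m)"
  by (induction m) (simp_all add: v_mult)

lemma v_power_pos: "0 < v x \<Longrightarrow> 0 < m \<Longrightarrow> 0 < v (x ^ m)"
proof (induction m)
  case (Suc m)
  have "0 \<le> v (x ^ m)"
    using Suc.prems by (intro v_power_nonneg) simp
  with Suc.prems show ?case
    by (simp add: v_mult add_pos_nonneg)
qed simp

lemma v_prod: "finite S \<Longrightarrow> v (prod g S) = (\<Sum>j\<in>S. v (g j))"
  by (induction S rule: finite_induct) (simp_all add: v_mult)

lemma v_sum_pos: "finite S \<Longrightarrow> \<forall>k\<in>S. 0 < v (g k) \<Longrightarrow> 0 < v (sum g S)"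
proof (induction S rule: finite_induct)
  case (insert x F)
  then have "0 < min (v (g x)) (v (sum g F))"
    by simp
  also have "\<dots> \<le> v (sum g (insert x F))"
    using insert.hyps v_ultrametric by simp
  finally show ?case .
qed simp

lemma v_sub_mult_eq: "v b = 0 \<Longrightarrow> v (a - c * b) = v (a / b - c)"
proof -
  assume "v b = 0"
  then have "b \<noteq> 0"
    by auto
  then have "a - c * b = b * (a / b - c)"
    by (simp add: field_simps)
  with \<open>v b = 0\<close> show ?thesis
    by (simp add: v_mult)
qed

lemma v_hom_eval_diff_power_pos:
  assumes coeffs: "\<forall>k. 0 \<le> v (coeff f k)" and "degree f = n" "lead_coeff f = 1"
    and "0 \<le> v a" "0 < v b"
  shows "0 < v (hom_eval f n a b - a ^ n)"
proof -
  have "hom_eval f n a b - a ^ n = (\<Sum>k<n. coeff f k * a ^ k * b ^ (n - k))"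
    using assms(2,3) by (simp add: hom_eval_def lessThan_Suc_atMost[symmetric])
  also have "0 < v \<dots>"
  proof (rule v_sum_pos[OF finite_lessThan], intro ballI)
    fix k assume "k \<in> {..<n}"
    then have "0 < v (b ^ (n - k))"
      using \<open>0 < v b\<close> by (intro v_power_pos) auto
    moreover have "0 \<le> v (coeff f k * a ^ k)"
      using coeffs v_power_nonneg[OF \<open>0 \<le> v a\<close>] by (simp add: v_mult)
    ultimately show "0 < v (coeff f k * a ^ k * b ^ (n - k))"
      by (simp add: v_mult add_nonneg_pos)
  qed
  finally show ?thesis .
qed

lemma primitive_solution_v_snd_eq_0:
  assumes coeffs: "\<forall>k. 0 \<le> v (coeff f k)" and "degree f = n" "lead_coeff f = 1"
    and "0 < v (hom_eval f n a b)" and "0 \<le> v a" "0 \<le> v b"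
    and primitive: "u * a + w * b = 1" "0 \<le> v u" "0 \<le> v w"
  shows "v b = 0"
proof (rule ccontr)
  assume "v b \<noteq> 0"
  with \<open>0 \<le> v b\<close> have "0 < v b"
    by simp
  have "min (v u + v a) (v w + v b) \<le> 0"
    using v_ultrametric[of "u * a" "w * b"] primitive(1) by (simp add: v_mult)
  moreover have "0 < v w + v b"
    using primitive(3) \<open>0 < v b\<close> by (simp add: add_nonneg_pos)
  ultimately have "v u + v a \<le> 0"
    by (simp add: min_def split: if_splits)
  then have "v a = 0"
    using primitive(2) \<open>0 \<le> v a\<close> add_increasing[of "v u" "v a" "v a"] by simp
  let ?F = "hom_eval f n a b"
  have "min (v ?F) (v (?F - a ^ n)) \<le> v (?F - (?F - a ^ n))"
    by (rule v_ultrametric_diff)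
  moreover have "0 < v (?F - a ^ n)"
    using v_hom_eval_diff_power_pos[OF coeffs assms(2,3) \<open>0 \<le> v a\<close> \<open>0 < v b\<close>] .
  ultimately have "0 < v (a ^ n)"
    using \<open>0 < v ?F\<close> by (simp add: min_def split: if_splits)
  with v_power_eq_0[OF \<open>v a = 0\<close>] show False
    by simp
qed

lemma sum_v_sub_roots_eq:
  assumes "degree f = n" "f = (\<Prod>j<n. [:- \<alpha> j, 1:])" "v b = 0"
  shows "(\<Sum>j<n. v (a / b - \<alpha> j)) = v (hom_eval f n a b)"
proof -
  have "b \<noteq> 0"
    using \<open>v b = 0\<close> by auto
  have "poly f (a / b) = (\<Prod>j<n. a / b - \<alpha> j)"
    by (subst assms(2)) (simp add: poly_prod)
  then show ?thesis
    using hom_eval_eq_power_mult_poly[OF \<open>b \<noteq> 0\<close> assms(1)] v_power_eq_0[OF \<open>v b = 0\<close>]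
    by (simp add: v_mult v_prod)
qed

lemma nearest_point_v_le:
  assumes "finite S" "i \<in> S"
    and nearest: "\<forall>j\<in>S. v (x - \<beta> j) \<le> v (x - \<beta> i)"
    and sums: "(\<Sum>j\<in>S. v (y - \<beta> j)) = (\<Sum>j\<in>S. v (x - \<beta> j))"
  shows "v (y - \<beta> i) \<le> v (x - \<beta> i)"
proof (rule ccontr)
  assume "\<not> ?thesis"
  then have closer: "v (x - \<beta> i) < v (y - \<beta> i)"
    by simp
  have "min (v (y - \<beta> i)) (v (x - \<beta> i)) \<le> v ((y - \<beta> i) - (x - \<beta> i))"
    by (rule v_ultrametric_diff)
  then have "v (x - \<beta> i) \<le> v (y - x)"
    using closer by (simp add: min_def split: if_splits)
  have le: "\<forall>j\<in>S. v (x - \<beta> j) \<le> v (y - \<beta> j)"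
  proof
    fix j assume "j \<in> S"
    have "min (v (y - x)) (v (x - \<beta> j)) \<le> v ((y - x) + (x - \<beta> j))"
      by (rule v_ultrametric)
    moreover have "v (x - \<beta> j) \<le> v (y - x)"
      using nearest \<open>j \<in> S\<close> \<open>v (x - \<beta> i) \<le> v (y - x)\<close> by (meson order_trans)
    ultimately show "v (x - \<beta> j) \<le> v (y - \<beta> j)"
      by (simp add: min_def split: if_splits)
  qed
  have "\<forall>j\<in>S. \<bar>v (x - \<beta> j)\<bar> \<noteq> \<infinity>"
  proof
    fix j assume "j \<in> S"
    then have "v (x - \<beta> j) < v (y - \<beta> i)"
      using nearest closer by (meson order.strict_trans1)
    then have "x - \<beta> j \<noteq> 0"
      by auto
    then show "\<bar>v (x - \<beta> j)\<bar> \<noteq> \<infinity>"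
      by (rule v_finite)
  qed
  then have "(\<Sum>j\<in>S. v (x - \<beta> j)) < (\<Sum>j\<in>S. v (y - \<beta> j))"
    using ereal_sum_strict_mono_ex1[OF assms(1,2) le closer] by blast
  with sums show False
    by simp
qed

end

lemma normalized_discrete_valuation_imp_valuation:
  assumes "normalized_discrete_valuation v"
  shows "valuation v"
proof
  note v = assms[unfolded normalized_discrete_valuation_def]
  fix x y
  show "v x = \<infinity> \<longleftrightarrow> x = 0" "v (x * y) = v x + v y" "min (v x) (v y) \<le> v (x + y)"
    using v by blast+
  show "v x \<noteq> -\<infinity>"
  proof (cases "x = 0")
    case True
    with v have "v x = \<infinity>"
      by blast
    then show ?thesis
      by simp
  next
    case False
    with v obtain k :: int where "v x = ereal (of_int k)"
      by blast
    then show ?thesis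
      by simp
  qed
qed

theorem lemma2p3:
  fixes v :: "'l::field \<Rightarrow> ereal" and K :: "'l set" and f :: "'l poly" and n :: nat
    and \<alpha> :: "nat \<Rightarrow> 'l" and h a b a' b' :: 'l and i :: nat
  assumes val: "normalized_discrete_valuation v"
    and K_sub: "is_subfield K"
    and K_compl: "complete_nontrivial_on v K"
    and f_coeffs: "\<forall>k. coeff f k \<in> ring_of_integers v K"
    and f_deg: "degree f = n" and f_monic: "lead_coeff f = 1"
    and f_split: "f = (\<Prod>j<n. [:- \<alpha> j, 1:])"
    and L_split: "generated_by K (\<alpha> ` {..<n})"
    and h_int: "h \<in> ring_of_integers v K" and h_pos: "v h > 0"
    and ab: "a \<in> ring_of_integers v K" "b \<in> ring_of_integers v K"
    and ab': "a' \<in> ring_of_integers v K" "b' \<in> ring_of_integers v K"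
    and prim: "\<exists>u\<in>ring_of_integers v K. \<exists>w\<in>ring_of_integers v K. u * a + w * b = 1"
    and prim': "\<exists>u\<in>ring_of_integers v K. \<exists>w\<in>ring_of_integers v K. u * a' + w * b' = 1"
    and sol: "hom_eval f n a b = h" and sol': "hom_eval f n a' b' = h"
    and i: "i < n"
    and max: "v (a - \<alpha> i * b) = (MAX j\<in>{..<n}. v (a - \<alpha> j * b))"
    and max': "v (a' - \<alpha> i * b') = (MAX j\<in>{..<n}. v (a' - \<alpha> j * b'))"
  shows "v (a - \<alpha> i * b) = v (a' - \<alpha> i * b')"
proof -
  interpret valuation v
    using val by (rule normalized_discrete_valuation_imp_valuation)
  have integral: "\<And>x. x \<in> ring_of_integers v K \<Longrightarrow> 0 \<le> v x"
    by (simp add: ring_of_integers_def)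
  note snd_unit = primitive_solution_v_snd_eq_0[OF _ f_deg f_monic]
  have "v b = 0" "v b' = 0"
    using f_coeffs prim prim' ab ab' sol sol' h_pos integral by (metis snd_unit)+
  note dist = v_sub_mult_eq[OF \<open>v b = 0\<close>] v_sub_mult_eq[OF \<open>v b' = 0\<close>]
  have sums: "(\<Sum>j<n. v (a / b - \<alpha> j)) = (\<Sum>j<n. v (a' / b' - \<alpha> j))"
    using sum_v_sub_roots_eq[OF f_deg f_split] \<open>v b = 0\<close> \<open>v b' = 0\<close> sol sol' by simp
  have "\<forall>j\<in>{..<n}. v (a / b - \<alpha> j) \<le> v (a / b - \<alpha> i)"
    "\<forall>j\<in>{..<n}. v (a' / b' - \<alpha> j) \<le> v (a' / b' - \<alpha> i)"
    using max max' dist by (simp_all del: Max_less_iff)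
  with sums i show ?thesis
    unfolding dist by (intro antisym nearest_point_v_le) auto
qed

end
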